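(* Let $m,n\ge1$ and let $\mu$ be a partition with fewer than $m$ positive parts and $\mu_1<n$. Then the $m\times n$ matrix $M^\mu(m,n)$ is a partial alternating sign matrix whose first row sum is $1$, whose first column sum is $1$, and all of whose other row sums and column sums are $0$.
   Context: A partition $\mu=(\mu_1\ge\mu_2\ge\cdots)$ is a weakly decreasing sequence of nonnegative integers with finitely many nonzero terms. For such $\mu$ with fewer than $m$ positive parts and $\mu_1<n$, the $m\times n$ matrix $M^\mu(m,n)$ has entries: $M^\mu_{1,\mu_1+1}=1$; for each $1\le k\le m-1$ with $\mu_k>\mu_{k+1}$, $M^\mu_{k+1,\mu_{k+1}+1}=1$ and $M^\mu_{k+1,\mu_k+1}=-1$; all other entries are $0$. An $m\times n$ partial alternating sign matrix is an $m\times n$ matrix $M$ with entries in $\{-1,0,1\}$ such that $\sum_{i'=1}^{i}M_{i'j}\in\{0,1\}$ and $\sum_{j'=1}^{j}M_{ij'}\in\{0,1\}$ for all $1\le i\le m$, $1\le j\le n$. *)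

theory Defs
  imports Main
begin

text \<open>Partitions are sequences indexed from 1: the parts are mu 1, mu 2, ...
  (the value mu 0 is irrelevant). Matrices are functions nat => nat => int,
  with rows indexed 1..m and columns 1..n.\<close>

definition is_partition :: "(nat \<Rightarrow> nat) \<Rightarrow> bool" where
  "is_partition mu \<longleftrightarrow> (\<forall>i\<ge>1. mu (Suc i) \<le> mu i) \<and> finite {i. 1 \<le> i \<and> 0 < mu i}"

definition num_pos_parts :: "(nat \<Rightarrow> nat) \<Rightarrow> nat" where
  "num_pos_parts mu = card {i. 1 \<le> i \<and> 0 < mu i}"

definition Mmu :: "(nat \<Rightarrow> nat) \<Rightarrow> nat \<Rightarrow> nat \<Rightarrow> nat \<Rightarrow> nat \<Rightarrow> int" where
  "Mmu mu m n i j =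
    (if 1 \<le> i \<and> i \<le> m \<and> 1 \<le> j \<and> j \<le> n then
       (if i = 1 \<and> j = mu 1 + 1 then 1
        else if 2 \<le> i \<and> mu (i - 1) > mu i \<and> j = mu i + 1 then 1
        else if 2 \<le> i \<and> mu (i - 1) > mu i \<and> j = mu (i - 1) + 1 then -1
        else 0)
     else 0)"

definition partial_asm :: "nat \<Rightarrow> nat \<Rightarrow> (nat \<Rightarrow> nat \<Rightarrow> int) \<Rightarrow> bool" where
  "partial_asm m n M \<longleftrightarrow>
     (\<forall>i\<in>{1..m}. \<forall>j\<in>{1..n}. M i j \<in> {-1, 0, 1}) \<and>
     (\<forall>i\<in>{1..m}. \<forall>j\<in>{1..n}. (\<Sum>i'=1..i. M i' j) \<in> {0, 1}) \<and>
     (\<forall>i\<in>{1..m}. \<forall>j\<in>{1..n}. (\<Sum>j'=1..j. M i j') \<in> {0, 1})"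

end

theory Submission
  imports Defs
begin

text \<open>Let \<open>E\<close> be the matrix with a single entry \<open>1\<close> in each row \<open>i \<ge> 1\<close>, in column \<open>\<mu>\<^sub>i + 1\<close>.
  Because \<open>\<mu>\<close> is weakly decreasing, \<open>M\<^sup>\<mu>\<close> is \<open>E\<close> minus \<open>E\<close> shifted down by one row. Hence the
  partial column sums of \<open>M\<^sup>\<mu>\<close> telescope to a row of \<open>E\<close>, a 0-1 vector, and the partial row sum
  of row \<open>i\<close> up to column \<open>j\<close> is \<open>[\<mu>\<^sub>i < j] - [\<mu>\<^sub>i\<^sub>-\<^sub>1 < j]\<close>, which lies in \<open>{0, 1}\<close> since
  \<open>\<mu>\<^sub>i \<le> \<mu>\<^sub>i\<^sub>-\<^sub>1\<close>. With fewer than \<open>m\<close> positive parts, \<open>\<mu>\<^sub>m = 0\<close>, so the full column sums form the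
  first unit vector; with \<open>\<mu>\<^sub>1 < n\<close> all full row sums except the first vanish.\<close>

lemma is_partition_antimono:
  assumes "is_partition mu" "1 \<le> i" "i \<le> j"
  shows "mu j \<le> mu i"
  using assms(3)
proof (induction j rule: dec_induct)
  case base
  then show ?case by simp
next
  case (step k)
  then have "mu (Suc k) \<le> mu k"
    using assms(1,2) unfolding is_partition_def by auto
  with step.IH show ?case by simp
qed

lemma is_partition_le_pred:
  assumes "is_partition mu" "2 \<le> i"
  shows "mu i \<le> mu (i - 1)"
  using is_partition_antimono[OF assms(1), of "i - 1" i] assms(2) by simp

lemma is_partition_vanishes_beyond_num_pos_parts:
  assumes "is_partition mu" "num_pos_parts mu < k"
  shows "mu k = 0"
proof (rule ccontr)
  assume "mu k \<noteq> 0"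
  then have "{1..k} \<subseteq> {i. 1 \<le> i \<and> 0 < mu i}"
    using is_partition_antimono[OF assms(1)] by (fastforce simp: le_zero_eq)
  moreover have "finite {i. 1 \<le> i \<and> 0 < mu i}"
    using assms(1) unfolding is_partition_def by simp
  ultimately have "k \<le> num_pos_parts mu"
    unfolding num_pos_parts_def by (metis card_atLeastAtMost card_mono diff_Suc_1)
  with assms(2) show False by simp
qed

definition part_marker :: "(nat \<Rightarrow> nat) \<Rightarrow> nat \<Rightarrow> nat \<Rightarrow> int" where
  "part_marker mu i j = (if 1 \<le> i \<and> j = mu i + 1 then 1 else 0)"

lemma Mmu_eq_part_marker_diff:
  assumes "is_partition mu" "1 \<le> i" "i \<le> m" "1 \<le> j" "j \<le> n"
  shows "Mmu mu m n i j = part_marker mu i j - part_marker mu (i - 1) j"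
proof (cases "i = 1")
  case True
  then show ?thesis using assms unfolding Mmu_def part_marker_def by auto
next
  case False
  then have "mu i \<le> mu (i - 1)"
    using is_partition_le_pred[OF assms(1)] assms(2) by simp
  then show ?thesis using assms False unfolding Mmu_def part_marker_def by auto
qed

lemma sum_part_marker_row:
  "(\<Sum>j'=1..j. part_marker mu i j') = (if 1 \<le> i \<and> mu i < j then 1 else 0)"
proof -
  have "(\<Sum>j'=1..j. part_marker mu i j') =
      (\<Sum>j'\<in>{1..j}. if j' = mu i + 1 then (if 1 \<le> i then 1 else 0) else 0)"
    unfolding part_marker_def by (rule sum.cong) auto
  also have "\<dots> = (if 1 \<le> i \<and> mu i < j then 1 else 0)"
    by (subst sum.delta) auto
  finally show ?thesis .
qed

lemma Mmu_column_partial_sum: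
  assumes "is_partition mu" "i \<le> m" "1 \<le> j" "j \<le> n"
  shows "(\<Sum>i'=1..i. Mmu mu m n i' j) = part_marker mu i j"
  using assms(2)
proof (induction i)
  case 0
  then show ?case by (simp add: part_marker_def)
next
  case (Suc k)
  then show ?case
    using Mmu_eq_part_marker_diff[OF assms(1), of "Suc k" m j n] assms(3,4) by simp
qed

lemma Mmu_row_partial_sum:
  assumes "is_partition mu" "1 \<le> i" "i \<le> m" "j \<le> n"
  shows "(\<Sum>j'=1..j. Mmu mu m n i j') =
    (if mu i < j then 1 else 0) - (if 2 \<le> i \<and> mu (i - 1) < j then 1 else 0)"
proof -
  have "(\<Sum>j'=1..j. Mmu mu m n i j') =
      (\<Sum>j'=1..j. part_marker mu i j') - (\<Sum>j'=1..j. part_marker mu (i - 1) j')"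
    using Mmu_eq_part_marker_diff[OF assms(1-3)] assms(4)
    by (simp add: sum_subtractf[symmetric])
  then show ?thesis
    unfolding sum_part_marker_row using assms(2) by auto
qed

lemma partial_asm_Mmu:
  assumes "is_partition mu"
  shows "partial_asm m n (Mmu mu m n)"
proof -
  have "(\<Sum>j'=1..j. Mmu mu m n i j') \<in> {0, 1}" if "i \<in> {1..m}" "j \<in> {1..n}" for i j
    using Mmu_row_partial_sum[OF assms, of i m j n] that
      is_partition_le_pred[OF assms, of i] by auto
  moreover have "(\<Sum>i'=1..i. Mmu mu m n i' j) \<in> {0, 1}" if "i \<in> {1..m}" "j \<in> {1..n}" for i j
    using Mmu_column_partial_sum[OF assms, of i m j n] that by (simp add: part_marker_def)
  ultimately show ?thesis
    unfolding partial_asm_def Mmu_def by auto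
qed

lemma Mmu_row_sum:
  assumes "is_partition mu" "mu 1 < n" "1 \<le> i" "i \<le> m"
  shows "(\<Sum>j=1..n. Mmu mu m n i j) = (if i = 1 then 1 else 0)"
proof -
  have below_n: "mu k < n" if "1 \<le> k" for k
    using is_partition_antimono[OF assms(1) order.refl that] assms(2) by simp
  have "mu i < n" "2 \<le> i \<longrightarrow> mu (i - 1) < n"
    using below_n assms(3) by simp_all
  then show ?thesis
    using Mmu_row_partial_sum[OF assms(1,3,4), of n n] assms(3) by auto
qed

lemma Mmu_column_sum:
  assumes "is_partition mu" "num_pos_parts mu < m" "1 \<le> j" "j \<le> n"
  shows "(\<Sum>i=1..m. Mmu mu m n i j) = (if j = 1 then 1 else 0)"
  using Mmu_column_partial_sum[OF assms(1), of m m j n] assms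
    is_partition_vanishes_beyond_num_pos_parts[OF assms(1,2)]
  by (simp add: part_marker_def)

theorem mainTheorem2:
  fixes m n :: nat and mu :: "nat \<Rightarrow> nat"
  assumes "1 \<le> m" and "1 \<le> n"
    and "is_partition mu"
    and "num_pos_parts mu < m"
    and "mu 1 < n"
  shows "partial_asm m n (Mmu mu m n)
    \<and> (\<Sum>j=1..n. Mmu mu m n 1 j) = 1
    \<and> (\<Sum>i=1..m. Mmu mu m n i 1) = 1
    \<and> (\<forall>i\<in>{2..m}. (\<Sum>j=1..n. Mmu mu m n i j) = 0)
    \<and> (\<forall>j\<in>{2..n}. (\<Sum>i=1..m. Mmu mu m n i j) = 0)"
  using partial_asm_Mmu[OF assms(3)]
    Mmu_row_sum[OF assms(3,5)] Mmu_column_sum[OF assms(3,4)] assms(1,2)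
  by auto

end
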